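(* Let $T$ be a triangle and $a\in[0,1]$. If $h(n,T)\le a n^3(1+o(1))$ as $n\to\infty$, then $h(n,T)\le a n^3$ for every positive integer $n$.
   Context: For a triangle $T$ with side lengths $a_1,a_2,a_3$ and $\varepsilon>0$, with $\varepsilon'=\varepsilon\min\{a_1,a_2,a_3\}$, a triangle $A'B'C'$ is $\varepsilon$-congruent to $T$ if there are $A,B,C\in\mathbb{R}^2$ with $ABC$ congruent to $T$ and $A',B',C'$ within distance $\varepsilon'$ of $A,B,C$ respectively. $h(n,T,\varepsilon)$ is the maximum over $n$-point sets $P\subseteq\mathbb{R}^2$ of the number of 3-subsets of $P$ forming triangles $\varepsilon$-congruent to $T$, and $h(n,T)=\min_{\varepsilon>0}h(n,T,\varepsilon)$. *)

theory Defs
  imports "HOL-Analysis.Analysis"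
begin

definition is_triangle :: "real \<times> real \<times> real \<Rightarrow> bool" where
  "is_triangle T = (case T of (a1, a2, a3) \<Rightarrow>
      0 < a1 \<and> 0 < a2 \<and> 0 < a3 \<and> a1 < a2 + a3 \<and> a2 < a1 + a3 \<and> a3 < a1 + a2)"

definition congruent_tri :: "real^2 \<Rightarrow> real^2 \<Rightarrow> real^2 \<Rightarrow> real \<times> real \<times> real \<Rightarrow> bool" where
  "congruent_tri A B C T = (case T of (a1, a2, a3) \<Rightarrow>
      dist B C = a1 \<and> dist C A = a2 \<and> dist A B = a3)"

definition min_side :: "real \<times> real \<times> real \<Rightarrow> real" where
  "min_side T = (case T of (a1, a2, a3) \<Rightarrow> min a1 (min a2 a3))"

definition eps_congruent :: "real^2 \<Rightarrow> real^2 \<Rightarrow> real^2 \<Rightarrow> real \<times> real \<times> real \<Rightarrow> real \<Rightarrow> bool" where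
  "eps_congruent A' B' C' T \<epsilon> = (\<exists>A B C. congruent_tri A B C T \<and>
      dist A' A \<le> \<epsilon> * min_side T \<and> dist B' B \<le> \<epsilon> * min_side T \<and> dist C' C \<le> \<epsilon> * min_side T)"

definition forms_eps_congruent :: "(real^2) set \<Rightarrow> real \<times> real \<times> real \<Rightarrow> real \<Rightarrow> bool" where
  "forms_eps_congruent S T \<epsilon> = (\<exists>A' B' C'. S = {A', B', C'} \<and> card S = 3 \<and> eps_congruent A' B' C' T \<epsilon>)"

definition count_eps :: "(real^2) set \<Rightarrow> real \<times> real \<times> real \<Rightarrow> real \<Rightarrow> nat" where
  "count_eps P T \<epsilon> = card {S. S \<subseteq> P \<and> card S = 3 \<and> forms_eps_congruent S T \<epsilon>}"

definition h_eps :: "nat \<Rightarrow> real \<times> real \<times> real \<Rightarrow> real \<Rightarrow> nat" where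
  "h_eps n T \<epsilon> = Max {count_eps P T \<epsilon> | P. finite P \<and> card P = n}"

text \<open>h(n,T) = min over eps > 0 of h(n,T,eps) (the least element of a nonempty set of naturals).\<close>

definition h :: "nat \<Rightarrow> real \<times> real \<times> real \<Rightarrow> nat" where
  "h n T = Inf {h_eps n T \<epsilon> | \<epsilon>. \<epsilon> > 0}"

end

theory Submission
  imports Defs
begin

text \<open>Blowing up every point of an n-point set into a cluster of m points lying much closer
  together than \<open>\<epsilon> * min_side T\<close> turns each \<open>\<epsilon>\<close>-congruent triangle into \<open>m\<^sup>3\<close> distinct
  \<open>2\<epsilon>\<close>-congruent ones. As \<open>h\<close> is a minimum over all \<open>\<epsilon>\<close>, this gives the supermultiplicativity
  \<open>m\<^sup>3 h(n,T) \<le> h(nm,T)\<close>. Hence \<open>h(n,T)/n\<^sup>3 \<le> h(nm,T)/(nm)\<^sup>3 \<le> a (1 + o(1))\<close> as \<open>m \<rightarrow> \<infinity>\<close>.\<close>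

lemma exists_cluster_map:
  fixes P :: "'a::euclidean_space set" and m :: nat
  assumes "finite P" and "r > 0"
  shows "\<exists>f. inj_on f (P \<times> {..<m}) \<and> (\<forall>p i. i < m \<longrightarrow> dist (f (p, i)) p \<le> r)"
proof -
  obtain e :: 'a where e: "norm e = 1"
    using vector_choose_size[of 1] by auto
  \<comment> \<open>Shifts stay below the minimal distance of \<open>P\<close>, so distinct clusters cannot meet; inserting \<open>r\<close> also makes \<open>D\<close> nonempty.\<close>
  define D where "D = insert r {dist p q | p q. p \<in> P \<and> q \<in> P \<and> p \<noteq> q}"
  have "finite D"
  proof -
    have "D \<subseteq> insert r ((\<lambda>(p, q). dist p q) ` (P \<times> P))"
      unfolding D_def by auto
    then show ?thesis
      using \<open>finite P\<close> finite_subset by blast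
  qed
  define \<delta> where "\<delta> = Min D / (real m + 1)"
  have "Min D > 0"
    using \<open>finite D\<close> \<open>r > 0\<close> by (auto simp: D_def)
  then have "\<delta> > 0"
    by (simp add: \<delta>_def)
  have small: "real i * \<delta> < Min D" if "i < m" for i
  proof -
    have "real i * \<delta> < (real m + 1) * \<delta>"
      using that \<open>\<delta> > 0\<close> by (intro mult_strict_right_mono) auto
    then show ?thesis
      by (simp add: \<delta>_def)
  qed
  have Min_le_dist: "Min D \<le> dist p q" if "p \<in> P" "q \<in> P" "p \<noteq> q" for p q
    using \<open>finite D\<close> that by (intro Min_le) (auto simp: D_def)
  define f where "f = (\<lambda>(p, i). p + (real i * \<delta>) *\<^sub>R e)"
  have dist_f: "dist (f (p, i)) p = real i * \<delta>" for p i
    using e \<open>\<delta> > 0\<close> by (simp add: f_def dist_norm)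
  have "inj_on f (P \<times> {..<m})"
  proof (rule inj_onI, clarify)
    fix p i q j
    assume pq: "p \<in> P" "q \<in> P" and ij: "i < m" "j < m" and eq: "f (p, i) = f (q, j)"
    then have diff: "p - q = (real j * \<delta> - real i * \<delta>) *\<^sub>R e"
      by (simp add: f_def algebra_simps)
    have "dist p q = \<bar>real j - real i\<bar> * \<delta>"
      using diff e \<open>\<delta> > 0\<close> by (simp add: dist_norm abs_mult left_diff_distrib[symmetric])
    also have "\<dots> \<le> real (max i j) * \<delta>"
      using \<open>\<delta> > 0\<close> by (intro mult_right_mono) auto
    also have "\<dots> < Min D"
      using ij by (intro small) simp
    finally have "p = q"
      using Min_le_dist pq by force
    with diff e \<open>\<delta> > 0\<close> show "p = q \<and> i = j"
      by auto
  qed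
  moreover have "dist (f (p, i)) p \<le> r" if "i < m" for p i
    using dist_f small[OF that] Min_le[OF \<open>finite D\<close>, of r] by (simp add: D_def)
  ultimately show ?thesis
    by blast
qed

lemma lifted_image_subsetD:
  assumes inj: "inj_on f (P \<times> I)" and "S \<subseteq> P" "S' \<subseteq> P" "\<sigma> \<in> S \<rightarrow>\<^sub>E I" "\<tau> \<in> S' \<rightarrow>\<^sub>E I"
    and sub: "(\<lambda>x. f (x, \<sigma> x)) ` S \<subseteq> (\<lambda>x. f (x, \<tau> x)) ` S'"
  shows "S \<subseteq> S' \<and> (\<forall>x\<in>S. \<sigma> x = \<tau> x)"
proof (intro conjI subsetI ballI)
  fix x assume "x \<in> S"
  with sub obtain y where "y \<in> S'" and "f (x, \<sigma> x) = f (y, \<tau> y)"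
    by blast
  with assms(2-5) \<open>x \<in> S\<close> have "(x, \<sigma> x) = (y, \<tau> y)"
    by (intro inj_onD[OF inj]) auto
  with \<open>y \<in> S'\<close> show "x \<in> S'" and "\<sigma> x = \<tau> x"
    by auto
qed

lemma card_lifted_subsets:
  assumes inj: "inj_on f (P \<times> I)" and "finite P" "finite I"
    and \<S>: "\<And>S. S \<in> \<S> \<Longrightarrow> S \<subseteq> P \<and> card S = k"
  shows "card ((\<lambda>(S, \<sigma>). (\<lambda>x. f (x, \<sigma> x)) ` S) ` (SIGMA S:\<S>. S \<rightarrow>\<^sub>E I)) = card I ^ k * card \<S>"
proof -
  have "finite \<S>"
    using \<S> \<open>finite P\<close> by (intro finite_subset[of \<S> "Pow P"]) auto
  have "inj_on (\<lambda>(S, \<sigma>). (\<lambda>x. f (x, \<sigma> x)) ` S) (SIGMA S:\<S>. S \<rightarrow>\<^sub>E I)"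
  proof (rule inj_onI, clarsimp)
    fix S \<sigma> S' \<tau>
    assume "S \<in> \<S>" "S' \<in> \<S>" and \<sigma>: "\<sigma> \<in> S \<rightarrow>\<^sub>E I" and \<tau>: "\<tau> \<in> S' \<rightarrow>\<^sub>E I"
      and eq: "(\<lambda>x. f (x, \<sigma> x)) ` S = (\<lambda>x. f (x, \<tau> x)) ` S'"
    then have "S \<subseteq> P" "S' \<subseteq> P"
      using \<S> by auto
    have "S \<subseteq> S'" and "\<forall>x\<in>S. \<sigma> x = \<tau> x"
      using lifted_image_subsetD[OF inj \<open>S \<subseteq> P\<close> \<open>S' \<subseteq> P\<close> \<sigma> \<tau>] eq by simp_all
    moreover have "S' \<subseteq> S"
      using lifted_image_subsetD[OF inj \<open>S' \<subseteq> P\<close> \<open>S \<subseteq> P\<close> \<tau> \<sigma>] eq by simp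
    ultimately show "S = S' \<and> \<sigma> = \<tau>"
      using \<sigma> \<tau> by (auto intro: PiE_ext)
  qed
  then have "card ((\<lambda>(S, \<sigma>). (\<lambda>x. f (x, \<sigma> x)) ` S) ` (SIGMA S:\<S>. S \<rightarrow>\<^sub>E I))
      = card (SIGMA S:\<S>. S \<rightarrow>\<^sub>E I)"
    by (rule card_image)
  also have "\<dots> = (\<Sum>S\<in>\<S>. card (S \<rightarrow>\<^sub>E I))"
    using \<open>finite \<S>\<close> \<S> \<open>finite P\<close> \<open>finite I\<close>
    by (intro card_SigmaI) (auto intro!: finite_PiE dest: finite_subset)
  also have "\<dots> = (\<Sum>S\<in>\<S>. card I ^ k)"
  proof (rule sum.cong)
    fix S assume "S \<in> \<S>"
    with \<S> \<open>finite P\<close> have "finite S" and "card S = k"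
      by (auto dest: finite_subset)
    then show "card (S \<rightarrow>\<^sub>E I) = card I ^ k"
      by (simp add: card_PiE)
  qed simp
  finally show ?thesis
    by simp
qed

lemma forms_eps_congruent_perturb:
  assumes "forms_eps_congruent S T \<epsilon>" and "inj_on g S"
    and moved: "\<And>x. x \<in> S \<Longrightarrow> dist (g x) x \<le> \<delta> * min_side T"
  shows "forms_eps_congruent (g ` S) T (\<epsilon> + \<delta>)"
proof -
  obtain A' B' C' A B C where S: "S = {A', B', C'}" "card S = 3" and "congruent_tri A B C T"
    and close: "dist A' A \<le> \<epsilon> * min_side T" "dist B' B \<le> \<epsilon> * min_side T"
      "dist C' C \<le> \<epsilon> * min_side T"
    using assms(1) unfolding forms_eps_congruent_def eps_congruent_def by blast
  have "dist (g X') X \<le> (\<epsilon> + \<delta>) * min_side T"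
    if "X' \<in> S" "dist X' X \<le> \<epsilon> * min_side T" for X' X
    using dist_triangle[of "g X'" X X'] moved[OF that(1)] that(2) by (simp add: distrib_right)
  with S close have "eps_congruent (g A') (g B') (g C') T (\<epsilon> + \<delta>)"
    unfolding eps_congruent_def using \<open>congruent_tri A B C T\<close> by blast
  moreover have "g ` S = {g A', g B', g C'}" and "card (g ` S) = 3"
    using S card_image[OF \<open>inj_on g S\<close>] by auto
  ultimately show ?thesis
    unfolding forms_eps_congruent_def by metis
qed

lemma count_eps_blowup:
  assumes "finite P" and "\<epsilon> > 0" and "min_side T > 0"
  shows "\<exists>Q. finite Q \<and> card Q = card P * m \<and> m ^ 3 * count_eps P T \<epsilon> \<le> count_eps Q T (2 * \<epsilon>)"
proof -
  obtain f where inj: "inj_on f (P \<times> {..<m})"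
    and moved: "\<And>p i. i < m \<Longrightarrow> dist (f (p, i)) p \<le> \<epsilon> * min_side T"
    using exists_cluster_map[OF \<open>finite P\<close>, of "\<epsilon> * min_side T" m] assms(2,3) by auto
  define Q where "Q = f ` (P \<times> {..<m})"
  define \<S> where "\<S> = {S. S \<subseteq> P \<and> card S = 3 \<and> forms_eps_congruent S T \<epsilon>}"
  define lifts where "lifts = (\<lambda>(S, \<sigma>). (\<lambda>x. f (x, \<sigma> x)) ` S) ` (SIGMA S:\<S>. S \<rightarrow>\<^sub>E {..<m})"
  have "finite Q" and "card Q = card P * m"
    using \<open>finite P\<close> card_image[OF inj] by (simp_all add: Q_def card_cartesian_product)
  have "m ^ 3 * count_eps P T \<epsilon> = card lifts"
    using card_lifted_subsets[OF inj \<open>finite P\<close>, of \<S> 3]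
    by (simp add: lifts_def count_eps_def \<S>_def)
  also have "\<dots> \<le> count_eps Q T (2 * \<epsilon>)"
    unfolding count_eps_def
  proof (rule card_mono)
    show "finite {S. S \<subseteq> Q \<and> card S = 3 \<and> forms_eps_congruent S T (2 * \<epsilon>)}"
      by (rule finite_subset[OF _ finite_Collect_subsets[OF \<open>finite Q\<close>]]) blast
    show "lifts \<subseteq> {S. S \<subseteq> Q \<and> card S = 3 \<and> forms_eps_congruent S T (2 * \<epsilon>)}"
      unfolding lifts_def
    proof clarify
      fix S \<sigma> assume "S \<in> \<S>" and \<sigma>: "\<sigma> \<in> S \<rightarrow>\<^sub>E {..<m}"
      then have "S \<subseteq> P" and "card S = 3" and "forms_eps_congruent S T \<epsilon>"
        by (auto simp: \<S>_def)
      have inj_lift: "inj_on (\<lambda>x. f (x, \<sigma> x)) S"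
      proof (rule inj_onI)
        fix x y assume "x \<in> S" "y \<in> S" and eq: "f (x, \<sigma> x) = f (y, \<sigma> y)"
        with \<open>S \<subseteq> P\<close> \<sigma> have "(x, \<sigma> x) \<in> P \<times> {..<m}" "(y, \<sigma> y) \<in> P \<times> {..<m}"
          by auto
        then show "x = y"
          using inj_onD[OF inj eq] by simp
      qed
      have "forms_eps_congruent ((\<lambda>x. f (x, \<sigma> x)) ` S) T (\<epsilon> + \<epsilon>)"
        using \<open>forms_eps_congruent S T \<epsilon>\<close> \<sigma> moved by (intro forms_eps_congruent_perturb[OF _ inj_lift]) auto
      then have "forms_eps_congruent ((\<lambda>x. f (x, \<sigma> x)) ` S) T (2 * \<epsilon>)"
        by (simp only: mult_2)
      moreover have "(\<lambda>x. f (x, \<sigma> x)) ` S \<subseteq> Q"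
        using \<open>S \<subseteq> P\<close> \<sigma> by (auto simp: Q_def)
      moreover have "card ((\<lambda>x. f (x, \<sigma> x)) ` S) = 3"
        using card_image[OF inj_lift] \<open>card S = 3\<close> by simp
      ultimately show "(\<lambda>x. f (x, \<sigma> x)) ` S \<subseteq> Q \<and> card ((\<lambda>x. f (x, \<sigma> x)) ` S) = 3
          \<and> forms_eps_congruent ((\<lambda>x. f (x, \<sigma> x)) ` S) T (2 * \<epsilon>)"
        by blast
    qed
  qed
  finally show ?thesis
    using \<open>finite Q\<close> \<open>card Q = card P * m\<close> by blast
qed

lemma count_eps_le_card_Pow:
  assumes "finite P"
  shows "count_eps P T \<epsilon> \<le> 2 ^ card P"
proof -
  have "count_eps P T \<epsilon> \<le> card (Pow P)"
    unfolding count_eps_def using assms by (intro card_mono) auto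
  with assms show ?thesis
    by (simp add: card_Pow)
qed

lemma h_eps_attained:
  "\<exists>P. finite P \<and> card P = n \<and> count_eps P T \<epsilon> = h_eps n T \<epsilon>"
  and count_eps_le_h_eps:
  "finite P \<Longrightarrow> card P = n \<Longrightarrow> count_eps P T \<epsilon> \<le> h_eps n T \<epsilon>"
proof -
  let ?counts = "{count_eps P T \<epsilon> | P. finite P \<and> card P = n}"
  have "finite ?counts"
    by (rule finite_subset[of _ "{..2 ^ n}"]) (auto dest: count_eps_le_card_Pow)
  moreover have "?counts \<noteq> {}"
    using infinite_arbitrarily_large[OF infinite_UNIV_char_0, of n] by (force simp: finite_subset)
  ultimately have "h_eps n T \<epsilon> \<in> ?counts"
    unfolding h_eps_def by (rule Max_in)
  then show "\<exists>P. finite P \<and> card P = n \<and> count_eps P T \<epsilon> = h_eps n T \<epsilon>"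
    by auto
  show "count_eps P T \<epsilon> \<le> h_eps n T \<epsilon>" if "finite P" "card P = n"
    unfolding h_eps_def using \<open>finite ?counts\<close> that by (intro Max_ge) auto
qed

lemma h_le_h_eps: "\<epsilon> > 0 \<Longrightarrow> h n T \<le> h_eps n T \<epsilon>"
  unfolding h_def by (rule cInf_lower) auto

lemma h_supermultiplicative:
  assumes "min_side T > 0"
  shows "m ^ 3 * h n T \<le> h (n * m) T"
  unfolding h_def[of "n * m"]
proof (rule cInf_greatest)
  show "{h_eps (n * m) T \<epsilon> | \<epsilon>. \<epsilon> > 0} \<noteq> {}"
    by (auto intro: exI[of _ 1])
  fix x assume "x \<in> {h_eps (n * m) T \<epsilon> | \<epsilon>. \<epsilon> > 0}"
  then obtain \<epsilon> where "\<epsilon> > 0" and x: "x = h_eps (n * m) T \<epsilon>"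
    by auto
  obtain P where P: "finite P" "card P = n" "count_eps P T (\<epsilon> / 2) = h_eps n T (\<epsilon> / 2)"
    using h_eps_attained by blast
  obtain Q where Q: "finite Q" "card Q = n * m" "m ^ 3 * count_eps P T (\<epsilon> / 2) \<le> count_eps Q T \<epsilon>"
    using count_eps_blowup[OF \<open>finite P\<close> _ assms, of "\<epsilon> / 2" m] \<open>\<epsilon> > 0\<close> P(2) by auto
  have "m ^ 3 * h n T \<le> m ^ 3 * h_eps n T (\<epsilon> / 2)"
    using h_le_h_eps[of "\<epsilon> / 2"] \<open>\<epsilon> > 0\<close> by simp
  also have "\<dots> \<le> count_eps Q T \<epsilon>"
    using P(3) Q(3) by simp
  also have "\<dots> \<le> x"
    unfolding x using count_eps_le_h_eps[OF Q(1,2)] .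
  finally show "m ^ 3 * h n T \<le> x" .
qed

lemma le_of_supermultiplicative_asymptotic_bound:
  fixes u g :: "nat \<Rightarrow> real" and d :: nat
  assumes super: "\<And>n m. m > 0 \<Longrightarrow> real m ^ d * u n \<le> u (n * m)"
    and "g \<longlonglongrightarrow> 0" and bound: "\<forall>\<^sub>F k in sequentially. u k \<le> a * real k ^ d * (1 + g k)"
    and "n > 0"
  shows "u n \<le> a * real n ^ d"
proof -
  have mult_n: "filterlim (\<lambda>m. n * m) sequentially sequentially"
    using \<open>n > 0\<close> by (rule mult_nat_left_at_top)
  have "(\<lambda>m. a * real n ^ d * (1 + g (n * m))) \<longlonglongrightarrow> a * real n ^ d * (1 + 0)"
    using filterlim_compose[OF \<open>g \<longlonglongrightarrow> 0\<close> mult_n] by (intro tendsto_intros)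
  moreover have "\<forall>\<^sub>F m in sequentially. u n \<le> a * real n ^ d * (1 + g (n * m))"
    using eventually_compose_filterlim[OF bound mult_n] eventually_gt_at_top[of 0]
  proof eventually_elim
    case (elim m)
    have "real m ^ d * u n \<le> u (n * m)"
      using super \<open>m > 0\<close> .
    also have "\<dots> \<le> real m ^ d * (a * real n ^ d * (1 + g (n * m)))"
      using elim(1) by (simp add: power_mult_distrib algebra_simps)
    finally show ?case
      using \<open>m > 0\<close> by simp
  qed
  ultimately show ?thesis
    using tendsto_le[OF trivial_limit_sequentially _ tendsto_const] by fastforce
qed

theorem lemma4p1:
  fixes T :: "real \<times> real \<times> real" and a :: real
  assumes "is_triangle T"
    and "0 \<le> a" and "a \<le> 1"
    and "\<exists>g :: nat \<Rightarrow> real. g \<longlonglongrightarrow> 0 \<and>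
           (\<forall>\<^sub>F n in sequentially. real (h n T) \<le> a * real n ^ 3 * (1 + g n))"
  shows "\<forall>n :: nat. n > 0 \<longrightarrow> real (h n T) \<le> a * real n ^ 3"
proof (intro allI impI)
  fix n :: nat assume "n > 0"
  have "min_side T > 0"
    using \<open>is_triangle T\<close> by (auto simp: is_triangle_def min_side_def)
  then have "real m ^ 3 * real (h k T) \<le> real (h (k * m) T)" for k m
    using h_supermultiplicative[of T m k] by (metis of_nat_le_iff of_nat_mult of_nat_power)
  with assms(4) \<open>n > 0\<close> show "real (h n T) \<le> a * real n ^ 3"
    using le_of_supermultiplicative_asymptotic_bound[where u = "\<lambda>k. real (h k T)"] by blast
qed

end
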